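(* Let $M$ be a partial multiplication matrix whose row-column graph has at least one cycle, and let $\pi^\natural$ be a gridded $M$-coil defined on a cycle of $G_M$ of length $\ell$. Let $\pi^\#$ be any other $M$-gridding of the underlying permutation $\pi$, and let $c_1,\dots,c_r$ be the non-empty cells of $\pi^\#$ that lie in some single row of cells, or in some single column of cells. If cell $c_i$ contains $k_i$ points ($1\le i\le r$) and $S_i=\sum_{j\ne i}k_j$, then $k_i\le 2\ell(S_i+1)$ for each $i$.
   Context: A gridding matrix has entries in $\{0,1,-1\}$; an $m\times n$ one has $m$ columns, $n$ rows, $M_{ij}$ in column $i$ from the left and row $j$ from the bottom. An $M$-gridding of a permutation $\pi$ of length $L$ is a choice of vertical lines $\tfrac12=v_0\le\dots\le v_m=L+\tfrac12$ and horizontal lines $\tfrac12=h_0\le\dots\le h_n=L+\tfrac12$, not through points of $\pi$, such that in each cell $C_{ij}=\{v_{i-1}<x<v_i,\ h_{j-1}<y<h_j\}$ the points of $\pi$ are absent if $M_{ij}=0$, increasing if $M_{ij}=1$, decreasing if $M_{ij}=-1$; this gives an $M$-gridded permutation. The row-column graph $G_M$ is the bipartite graph on $\{1,\dots,m\}\cup\{1',\dots,n'\}$ with edge $ij'$ iff $M_{ij}\neq0$ (so non-zero cells correspond to edges). $M$ is a partial multiplication matrix if there are fixed $c_1,\dots,c_m,r_1,\dots,r_n\in\{\pm1\}$ with $M_{ij}=c_ir_j$ for each non-zero entry. Column $i$ is oriented left-to-right if $c_i=1$, right-to-left otherwise; row $j$ bottom-to-top if $r_j=1$, top-to-bottom otherwise.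 The orientation digraph $D_{\pi^\#}$ of an $M$-gridded permutation has its points as vertices, with $x\to y$ whenever $x,y$ lie in a common column of cells and $x$ precedes $y$ in that column's orientation, or in a common row of cells and $x$ precedes $y$ in that row's orientation. A gridded $M$-coil on a cycle of $G_M$ of length $\ell$ is an $M$-gridded permutation of length $n>\ell$ with an ordering $v_1,\dots,v_n$ of its points and a labelling by $1,\dots,\ell$ of the $\ell$ cells corresponding to the edges of that cycle such that (C1) $v_i$ lies in cell $i\bmod\ell$ (residues in $\{1,\dots,\ell\}$); (C2) $v_{i-1}\to v_i$ for $1<i\le n$; (C3) $v_i\to v_{i-\ell-1}$ for $\ell+1<i\le n$; (C4) $v_{\ell+1}\to v_1$. *)

theory Defs
  imports Main
begin

text \<open>A permutation of length L is a bijection pi on {1..L}; its points are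
  (x, pi x) for x in {1..L}, identified with their x-coordinate x.
  A vertical line at position a + 1/2 (a a natural number, 0 \<le> a \<le> L) is encoded by a;
  so v : {0..m} -> {0..L}, v 0 = 0, v m = L, v monotone.  A point x lies strictly between the
  lines v (i-1) + 1/2 and v i + 1/2 iff v (i-1) < x \<le> v i.  Same for horizontal lines h.
  A gridding matrix with m columns and n rows is M :: nat => nat => int, entries M i j for
  1 \<le> i \<le> m (column), 1 \<le> j \<le> n (row).\<close>

definition gridding_matrix :: "nat \<Rightarrow> nat \<Rightarrow> (nat \<Rightarrow> nat \<Rightarrow> int) \<Rightarrow> bool" where
  "gridding_matrix m n M \<longleftrightarrow> (\<forall>i\<in>{1..m}. \<forall>j\<in>{1..n}. M i j \<in> {-1, 0, 1})"

definition is_perm :: "nat \<Rightarrow> (nat \<Rightarrow> nat) \<Rightarrow> bool" where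
  "is_perm L \<pi> \<longleftrightarrow> bij_betw \<pi> {1..L} {1..L}"

definition grid_lines :: "nat \<Rightarrow> nat \<Rightarrow> (nat \<Rightarrow> nat) \<Rightarrow> bool" where
  "grid_lines k L v \<longleftrightarrow> v 0 = 0 \<and> v k = L \<and> (\<forall>i<k. v i \<le> v (Suc i))"

definition in_col :: "(nat \<Rightarrow> nat) \<Rightarrow> nat \<Rightarrow> nat \<Rightarrow> bool" where
  "in_col v i x \<longleftrightarrow> v (i - 1) < x \<and> x \<le> v i"

definition in_row :: "(nat \<Rightarrow> nat) \<Rightarrow> (nat \<Rightarrow> nat) \<Rightarrow> nat \<Rightarrow> nat \<Rightarrow> bool" where
  "in_row h \<pi> j x \<longleftrightarrow> h (j - 1) < \<pi> x \<and> \<pi> x \<le> h j"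

definition in_cell :: "(nat \<Rightarrow> nat) \<Rightarrow> (nat \<Rightarrow> nat) \<Rightarrow> (nat \<Rightarrow> nat) \<Rightarrow> nat \<Rightarrow> nat \<Rightarrow> nat \<Rightarrow> bool" where
  "in_cell v h \<pi> i j x \<longleftrightarrow> in_col v i x \<and> in_row h \<pi> j x"

definition cell_pts :: "nat \<Rightarrow> (nat \<Rightarrow> nat) \<Rightarrow> (nat \<Rightarrow> nat) \<Rightarrow> (nat \<Rightarrow> nat) \<Rightarrow> nat \<Rightarrow> nat \<Rightarrow> nat set" where
  "cell_pts L v h \<pi> i j = {x \<in> {1..L}. in_cell v h \<pi> i j x}"

definition M_gridding :: "nat \<Rightarrow> nat \<Rightarrow> (nat \<Rightarrow> nat \<Rightarrow> int) \<Rightarrow> nat \<Rightarrow> (nat \<Rightarrow> nat)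
    \<Rightarrow> (nat \<Rightarrow> nat) \<Rightarrow> (nat \<Rightarrow> nat) \<Rightarrow> bool" where
  "M_gridding m n M L \<pi> v h \<longleftrightarrow> grid_lines m L v \<and> grid_lines n L h \<and>
     (\<forall>i\<in>{1..m}. \<forall>j\<in>{1..n}.
        (M i j = 0 \<longrightarrow> cell_pts L v h \<pi> i j = {}) \<and>
        (M i j = 1 \<longrightarrow> (\<forall>x\<in>cell_pts L v h \<pi> i j. \<forall>y\<in>cell_pts L v h \<pi> i j. x < y \<longrightarrow> \<pi> x < \<pi> y)) \<and>
        (M i j = -1 \<longrightarrow> (\<forall>x\<in>cell_pts L v h \<pi> i j. \<forall>y\<in>cell_pts L v h \<pi> i j. x < y \<longrightarrow> \<pi> x > \<pi> y)))"

definition partial_mult :: "nat \<Rightarrow> nat \<Rightarrow> (nat \<Rightarrow> nat \<Rightarrow> int) \<Rightarrow> (nat \<Rightarrow> int) \<Rightarrow> (nat \<Rightarrow> int) \<Rightarrow> bool" where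
  "partial_mult m n M c r \<longleftrightarrow> (\<forall>i\<in>{1..m}. c i \<in> {-1, 1}) \<and> (\<forall>j\<in>{1..n}. r j \<in> {-1, 1}) \<and>
     (\<forall>i\<in>{1..m}. \<forall>j\<in>{1..n}. M i j \<noteq> 0 \<longrightarrow> M i j = c i * r j)"

text \<open>Row-column graph G_M: vertices Inl i (column i) and Inr j (row j').\<close>
definition GM_edge :: "nat \<Rightarrow> nat \<Rightarrow> (nat \<Rightarrow> nat \<Rightarrow> int) \<Rightarrow> nat + nat \<Rightarrow> nat + nat \<Rightarrow> bool" where
  "GM_edge m n M a b \<longleftrightarrow>
     (\<exists>i\<in>{1..m}. \<exists>j\<in>{1..n}. M i j \<noteq> 0 \<and> ((a = Inl i \<and> b = Inr j) \<or> (a = Inr j \<and> b = Inl i)))"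

definition GM_cycle :: "nat \<Rightarrow> nat \<Rightarrow> (nat \<Rightarrow> nat \<Rightarrow> int) \<Rightarrow> nat \<Rightarrow> (nat \<Rightarrow> nat + nat) \<Rightarrow> bool" where
  "GM_cycle m n M l u \<longleftrightarrow> l \<ge> 3 \<and> inj_on u {..<l} \<and> (\<forall>k<l. GM_edge m n M (u k) (u (Suc k mod l)))"

fun edge_cell :: "nat + nat \<Rightarrow> nat + nat \<Rightarrow> nat \<times> nat" where
  "edge_cell (Inl i) (Inr j) = (i, j)"
| "edge_cell (Inr j) (Inl i) = (i, j)"
| "edge_cell _ _ = (0, 0)"

definition cycle_cells :: "nat \<Rightarrow> (nat \<Rightarrow> nat + nat) \<Rightarrow> (nat \<times> nat) set" where
  "cycle_cells l u = {edge_cell (u k) (u (Suc k mod l)) | k. k < l}"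

definition orient_arrow :: "nat \<Rightarrow> nat \<Rightarrow> (nat \<Rightarrow> int) \<Rightarrow> (nat \<Rightarrow> int) \<Rightarrow> nat \<Rightarrow> (nat \<Rightarrow> nat)
    \<Rightarrow> (nat \<Rightarrow> nat) \<Rightarrow> (nat \<Rightarrow> nat) \<Rightarrow> nat \<Rightarrow> nat \<Rightarrow> bool" where
  "orient_arrow m n c r L \<pi> v h x y \<longleftrightarrow> x \<in> {1..L} \<and> y \<in> {1..L} \<and>
     ((\<exists>i\<in>{1..m}. in_col v i x \<and> in_col v i y \<and> (if c i = 1 then x < y else y < x)) \<or>
      (\<exists>j\<in>{1..n}. in_row h \<pi> j x \<and> in_row h \<pi> j y \<and> (if r j = 1 then \<pi> x < \<pi> y else \<pi> y < \<pi> x)))"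

text \<open>(pi, v, h) with ordering ord of its points (v_i = ord i) and labelling lab of the cycle cells
  is a gridded M-coil on the cycle u of length l.  Residue of i mod l in {1..l} is (i-1) mod l + 1.\<close>
definition gridded_coil :: "nat \<Rightarrow> nat \<Rightarrow> (nat \<Rightarrow> nat \<Rightarrow> int) \<Rightarrow> (nat \<Rightarrow> int) \<Rightarrow> (nat \<Rightarrow> int)
    \<Rightarrow> nat \<Rightarrow> (nat \<Rightarrow> nat) \<Rightarrow> (nat \<Rightarrow> nat) \<Rightarrow> (nat \<Rightarrow> nat)
    \<Rightarrow> nat \<Rightarrow> (nat \<Rightarrow> nat + nat) \<Rightarrow> (nat \<Rightarrow> nat) \<Rightarrow> (nat \<Rightarrow> nat \<times> nat) \<Rightarrow> bool" where
  "gridded_coil m n M c r L \<pi> v h l u ord lab \<longleftrightarrow>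
     is_perm L \<pi> \<and> M_gridding m n M L \<pi> v h \<and> GM_cycle m n M l u \<and> L > l \<and>
     bij_betw lab {1..l} (cycle_cells l u) \<and> bij_betw ord {1..L} {1..L} \<and>
     (\<forall>i\<in>{1..L}. in_cell v h \<pi> (fst (lab ((i - 1) mod l + 1))) (snd (lab ((i - 1) mod l + 1))) (ord i)) \<and>
     (\<forall>i. 1 < i \<and> i \<le> L \<longrightarrow> orient_arrow m n c r L \<pi> v h (ord (i - 1)) (ord i)) \<and>
     (\<forall>i. l + 1 < i \<and> i \<le> L \<longrightarrow> orient_arrow m n c r L \<pi> v h (ord i) (ord (i - l - 1))) \<and>
     orient_arrow m n c r L \<pi> v h (ord (l + 1)) (ord 1)"

end

theory Submission
  imports Defs
begin

text \<open>Fix a cell C of the new gridding, lying in a column X of that gridding, and consider the points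
  v_q, v_(q+l), v_(q+2l), ... of the coil carrying a fixed label q: they lie in a single cell of
  the coil gridding.  One neighbour of that cell along the cycle shares its column, and conditions
  (C2) and (C3) place a point of the neighbour cell between any two consecutive members of the
  label class, in the orientation of the column, with at most one exception at an end of the class.
  Hence between any two members of the class lying in C there is a point which lies in X, but in
  another row of the coil gridding: it is above or below both, so it is not in the monotone cell C.
  This injects all but two members of the class in C into X - C, and summing over the l labels
  gives |C| \<le> l (|X - C| + 2) \<le> 2 l (|X - C| + 1).  Rows are treated by transposing the picture.\<close>

section \<open>Grid lines and cells\<close>

lemma grid_lines_mono:
  assumes "grid_lines k L v" "i \<le> j" "j \<le> k"
  shows "v i \<le> v j"
  using assms by (intro lift_Suc_mono_le_ivl[of "{..<k}" v i j]) (auto simp: grid_lines_def)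

lemma in_col_less:
  assumes "grid_lines k L v" "i < i'" "i' \<le> k" "in_col v i a" "in_col v i' b"
  shows "a < b"
proof -
  have "v i \<le> v (i' - 1)" using grid_lines_mono[OF assms(1)] assms(2,3) by simp
  then show ?thesis using assms(4,5) unfolding in_col_def by simp
qed

lemma in_col_unique:
  assumes "grid_lines k L v" "i \<le> k" "i' \<le> k" "in_col v i a" "in_col v i' a"
  shows "i = i'"
  using in_col_less[OF assms(1)] assms(2-5) by (metis less_irrefl linorder_neqE_nat)

lemma in_col_exists:
  assumes "grid_lines k L v" "a \<in> {1..L}"
  obtains i where "i \<in> {1..k}" "in_col v i a"
proof -
  have ex: "\<exists>i. i \<le> k \<and> a \<le> v i" using assms unfolding grid_lines_def by auto
  define i where "i = (LEAST i. i \<le> k \<and> a \<le> v i)"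
  have i: "i \<le> k" "a \<le> v i" using LeastI_ex[OF ex] unfolding i_def by auto
  have "i \<noteq> 0" using i assms unfolding grid_lines_def by (cases i) auto
  moreover have "v (i - 1) < a"
    using not_less_Least[of "i - 1" "\<lambda>i. i \<le> k \<and> a \<le> v i"] i \<open>i \<noteq> 0\<close>
    unfolding i_def[symmetric] by auto
  ultimately show ?thesis using i by (intro that[of i]) (auto simp: in_col_def)
qed

definition precedes :: "int \<Rightarrow> nat \<Rightarrow> nat \<Rightarrow> bool" where
  "precedes s a b \<longleftrightarrow> (if s = 1 then a < b else b < a)"

lemma precedes_trans: "precedes s a b \<Longrightarrow> precedes s b d \<Longrightarrow> precedes s a d"
  unfolding precedes_def by (auto split: if_splits)

text \<open>The orientation digraph, with the points' horizontal and vertical coordinates given by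
  arbitrary functions f and g: transposing the picture just swaps the two.\<close>
definition grid_arrow :: "nat \<Rightarrow> nat \<Rightarrow> (nat \<Rightarrow> nat) \<Rightarrow> (nat \<Rightarrow> nat) \<Rightarrow> (nat \<Rightarrow> nat)
    \<Rightarrow> (nat \<Rightarrow> nat) \<Rightarrow> (nat \<Rightarrow> int) \<Rightarrow> (nat \<Rightarrow> int) \<Rightarrow> nat \<Rightarrow> nat \<Rightarrow> bool" where
  "grid_arrow m n v h f g c r x y \<longleftrightarrow>
     (\<exists>i\<in>{1..m}. in_col v i (f x) \<and> in_col v i (f y) \<and> precedes (c i) (f x) (f y)) \<or>
     (\<exists>j\<in>{1..n}. in_col h j (g x) \<and> in_col h j (g y) \<and> precedes (r j) (g x) (g y))"

lemma grid_arrow_transpose: "grid_arrow m n v h f g c r x y \<Longrightarrow> grid_arrow n m h v g f r c x y"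
  unfolding grid_arrow_def by blast

lemma grid_arrow_if_orient_arrow:
  "orient_arrow m n c r L \<pi> v h x y \<Longrightarrow> grid_arrow m n v h id \<pi> c r x y"
  unfolding orient_arrow_def grid_arrow_def precedes_def in_row_def in_col_def by auto

definition monotone_cell :: "(nat \<Rightarrow> nat) \<Rightarrow> (nat \<Rightarrow> nat) \<Rightarrow> nat set \<Rightarrow> bool" where
  "monotone_cell f g C \<longleftrightarrow>
     (\<forall>x\<in>C. \<forall>y\<in>C. f x < f y \<longrightarrow> g x < g y) \<or> (\<forall>x\<in>C. \<forall>y\<in>C. f x < f y \<longrightarrow> g y < g x)"

lemma monotone_cell_swap:
  assumes "inj_on f C" "monotone_cell f g C"
  shows "monotone_cell g f C"
proof -
  have f_less: "f x < f y" if "x \<in> C" "y \<in> C" "x \<noteq> y" "\<not> f y < f x" for x y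
    using that inj_onD[OF assms(1)] by (metis linorder_neqE_nat)
  consider "\<forall>x\<in>C. \<forall>y\<in>C. f x < f y \<longrightarrow> g x < g y" | "\<forall>x\<in>C. \<forall>y\<in>C. f x < f y \<longrightarrow> g y < g x"
    using assms(2) unfolding monotone_cell_def by blast
  then show ?thesis
  proof cases
    case 1
    then have "f x < f y" if "x \<in> C" "y \<in> C" "g x < g y" for x y
      using that f_less[OF that(1,2)] by (metis order_less_asym order_less_irrefl)
    then show ?thesis unfolding monotone_cell_def by blast
  next
    case 2
    then have "f y < f x" if "x \<in> C" "y \<in> C" "g x < g y" for x y
      using that f_less[OF that(2,1)] by (metis order_less_asym order_less_irrefl)
    then show ?thesis unfolding monotone_cell_def by blast
  qed
qed

definition grid_cell :: "nat \<Rightarrow> (nat \<Rightarrow> nat) \<Rightarrow> (nat \<Rightarrow> nat) \<Rightarrow> (nat \<Rightarrow> nat) \<Rightarrow> (nat \<Rightarrow> nat)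
    \<Rightarrow> nat \<Rightarrow> nat \<Rightarrow> nat set" where
  "grid_cell L f g a b i j = {x \<in> {1..L}. in_col a i (f x) \<and> in_col b j (g x)}"

lemma cell_pts_eq_grid_cell: "cell_pts L v h \<pi> i j = grid_cell L id \<pi> v h i j"
  unfolding cell_pts_def grid_cell_def in_cell_def in_row_def in_col_def by simp

lemma cell_pts_eq_grid_cell_transpose: "cell_pts L v h \<pi> i j = grid_cell L \<pi> id h v j i"
  unfolding cell_pts_def grid_cell_def in_cell_def in_row_def in_col_def by auto

lemma M_gridding_cell_monotone:
  assumes "gridding_matrix m n M" "M_gridding m n M L \<pi> v h" "i \<in> {1..m}" "j \<in> {1..n}"
  shows "monotone_cell id \<pi> (cell_pts L v h \<pi> i j)"
proof -
  have "M i j \<in> {-1, 0, 1}" using assms(1,3,4) unfolding gridding_matrix_def by auto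
  then show ?thesis using assms(2-4) unfolding M_gridding_def monotone_cell_def by auto
qed

lemma card_line_minus_grid_cell:
  assumes "grid_lines k L b" "g ` {1..L} \<subseteq> {1..L}" "j \<in> {1..k}"
  shows "card ({x \<in> {1..L}. in_col a i (f x)} - grid_cell L f g a b i j)
           = (\<Sum>j'\<in>{1..k} - {j}. card (grid_cell L f g a b i j'))"
proof -
  have "{x \<in> {1..L}. in_col a i (f x)} - grid_cell L f g a b i j
          = (\<Union>j'\<in>{1..k} - {j}. grid_cell L f g a b i j')"
  proof (intro equalityI subsetI)
    fix x assume x: "x \<in> {x \<in> {1..L}. in_col a i (f x)} - grid_cell L f g a b i j"
    then have "g x \<in> {1..L}" using assms(2) by blast
    then obtain j' where "j' \<in> {1..k}" "in_col b j' (g x)" using in_col_exists[OF assms(1)] by blast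
    then show "x \<in> (\<Union>j'\<in>{1..k} - {j}. grid_cell L f g a b i j')"
      using x unfolding grid_cell_def by auto
  next
    fix x assume "x \<in> (\<Union>j'\<in>{1..k} - {j}. grid_cell L f g a b i j')"
    then show "x \<in> {x \<in> {1..L}. in_col a i (f x)} - grid_cell L f g a b i j"
      using in_col_unique[OF assms(1)] assms(3) unfolding grid_cell_def by fastforce
  qed
  moreover have "grid_cell L f g a b i j1 \<inter> grid_cell L f g a b i j2 = {}"
    if "j1 \<in> {1..k}" "j2 \<in> {1..k}" "j1 \<noteq> j2" for j1 j2
    using in_col_unique[OF assms(1)] that unfolding grid_cell_def by auto
  ultimately show ?thesis by (simp add: card_UN_disjoint grid_cell_def)
qed

section \<open>Cells of a cycle of the row-column graph\<close>

lemma cycle_cell_endpoints: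
  assumes "GM_cycle m n M l u" "x \<in> cycle_cells l u"
  obtains k where "k < l" "x = edge_cell (u k) (u (Suc k mod l))"
    "fst x \<in> {1..m}" "snd x \<in> {1..n}" "{u k, u (Suc k mod l)} = {Inl (fst x), Inr (snd x)}"
proof -
  obtain k where k: "k < l" "x = edge_cell (u k) (u (Suc k mod l))"
    using assms(2) unfolding cycle_cells_def by auto
  then have "GM_edge m n M (u k) (u (Suc k mod l))" using assms(1) unfolding GM_cycle_def by auto
  then obtain i j where ij: "i \<in> {1..m}" "j \<in> {1..n}"
    "(u k = Inl i \<and> u (Suc k mod l) = Inr j) \<or> (u k = Inr j \<and> u (Suc k mod l) = Inl i)"
    unfolding GM_edge_def by blast
  then have "x = (i, j)" "{u k, u (Suc k mod l)} = {Inl i, Inr j}" using k(2) by auto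
  then show ?thesis using that[OF k] ij(1,2) by simp
qed

lemma cycle_cells_at_vertex_card_le_2:
  assumes cyc: "GM_cycle m n M l u"
  shows "card {x \<in> cycle_cells l u. Inl (fst x) = w \<or> Inr (snd x) = w} \<le> 2"
proof (cases "\<exists>p<l. u p = w")
  case False
  have "{x \<in> cycle_cells l u. Inl (fst x) = w \<or> Inr (snd x) = w} = {}"
  proof (intro equals0I)
    fix x assume x: "x \<in> {x \<in> cycle_cells l u. Inl (fst x) = w \<or> Inr (snd x) = w}"
    then obtain k where k: "k < l" "{u k, u (Suc k mod l)} = {Inl (fst x), Inr (snd x)}"
      using cycle_cell_endpoints[OF cyc] by blast
    have "w \<in> {Inl (fst x), Inr (snd x)}" using x by auto
    then have "w \<in> {u k, u (Suc k mod l)}" unfolding k(2) .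
    moreover have "Suc k mod l < l" using k(1) by simp
    ultimately show False using False k(1) by (metis empty_iff insert_iff)
  qed
  then show ?thesis by (metis card.empty le0)
next
  case True
  then obtain p where p: "p < l" "u p = w" by blast
  have l0: "0 < l" and inj: "inj_on u {..<l}" using cyc unfolding GM_cycle_def by auto
  define p' where "p' = (p + l - 1) mod l"
  have "{x \<in> cycle_cells l u. Inl (fst x) = w \<or> Inr (snd x) = w}
          \<subseteq> {edge_cell (u p) (u (Suc p mod l)), edge_cell (u p') (u p)}"
  proof
    fix x assume x: "x \<in> {x \<in> cycle_cells l u. Inl (fst x) = w \<or> Inr (snd x) = w}"
    then obtain k where k: "k < l" "x = edge_cell (u k) (u (Suc k mod l))"
      "{u k, u (Suc k mod l)} = {Inl (fst x), Inr (snd x)}"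
      using cycle_cell_endpoints[OF cyc] by blast
    have "w \<in> {Inl (fst x), Inr (snd x)}" using x by auto
    then have "w \<in> {u k, u (Suc k mod l)}" unfolding k(3) .
    moreover have "Suc k mod l < l" using l0 by simp
    ultimately have "k = p \<or> Suc k mod l = p" using inj_onD[OF inj] p k(1) by auto
    moreover have "k = p'" if "Suc k mod l = p"
      using that k(1) unfolding p'_def by (cases "Suc k = l") auto
    ultimately show "x \<in> {edge_cell (u p) (u (Suc p mod l)), edge_cell (u p') (u p)}"
      using k(2) by auto
  qed
  then have "card {x \<in> cycle_cells l u. Inl (fst x) = w \<or> Inr (snd x) = w}
      \<le> card {edge_cell (u p) (u (Suc p mod l)), edge_cell (u p') (u p)}"
    by (intro card_mono) simp_all
  also have "\<dots> \<le> 2" by (simp add: card_insert_if)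
  finally show ?thesis .
qed

lemma cycle_labels_in_line_card_le_2:
  assumes "GM_cycle m n M l u" "bij_betw lab {1..l} (cycle_cells l u)"
  shows "card {q \<in> {1..l}. fst (lab q) = i} \<le> 2" "card {q \<in> {1..l}. snd (lab q) = j} \<le> 2"
proof -
  have image_card_le: "card {q \<in> {1..l}. P (lab q)} \<le> card {x \<in> cycle_cells l u. P x}" for P
  proof -
    have "card {q \<in> {1..l}. P (lab q)} = card (lab ` {q \<in> {1..l}. P (lab q)})"
      by (intro card_image[symmetric] inj_on_subset[OF bij_betw_imp_inj_on[OF assms(2)]]) auto
    also have "\<dots> \<le> card {x \<in> cycle_cells l u. P x}"
    proof (intro card_mono)
      show "finite {x \<in> cycle_cells l u. P x}" unfolding cycle_cells_def by simp
      show "lab ` {q \<in> {1..l}. P (lab q)} \<subseteq> {x \<in> cycle_cells l u. P x}"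
        using bij_betw_apply[OF assms(2)] by auto
    qed
    finally show ?thesis .
  qed
  have card_le: "card {q \<in> {1..l}. Inl (fst (lab q)) = w \<or> Inr (snd (lab q)) = w} \<le> 2" for w
    by (rule order_trans[OF image_card_le[of "\<lambda>x. Inl (fst x) = w \<or> Inr (snd x) = w"]
          cycle_cells_at_vertex_card_le_2[OF assms(1)]])
  show "card {q \<in> {1..l}. fst (lab q) = i} \<le> 2" using card_le[of "Inl i"] by simp
  show "card {q \<in> {1..l}. snd (lab q) = j} \<le> 2" using card_le[of "Inr j"] by simp
qed

section \<open>Coils\<close>

text \<open>Of the conditions on a gridded coil only (C1)-(C3) are kept, together with the fact that no
  line of cells contains three cells of a cycle.  The coordinates of a point are given by arbitrary
  functions f and g, so that the transposed picture is again an instance (lemma transpose).\<close>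
locale coil_frame =
  fixes L l m n :: nat and ord :: "nat \<Rightarrow> nat" and lab :: "nat \<Rightarrow> nat \<times> nat"
    and v h f g :: "nat \<Rightarrow> nat" and c r :: "nat \<Rightarrow> int"
  assumes l_ge_3: "3 \<le> l" and l_less_L: "l < L"
    and ord_bij: "bij_betw ord {1..L} {1..L}"
    and lab_inj: "inj_on lab {1..l}"
    and lab_range: "lab ` {1..l} \<subseteq> {1..m} \<times> {1..n}"
    and v_lines: "grid_lines m L v" and h_lines: "grid_lines n L h"
    and point_in_cell: "\<And>j. j \<in> {1..L} \<Longrightarrow>
      in_col v (fst (lab ((j - 1) mod l + 1))) (f (ord j)) \<and>
      in_col h (snd (lab ((j - 1) mod l + 1))) (g (ord j))"
    and arrow_next: "\<And>j. 1 < j \<Longrightarrow> j \<le> L \<Longrightarrow> grid_arrow m n v h f g c r (ord (j - 1)) (ord j)"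
    and arrow_back: "\<And>j. l + 1 < j \<Longrightarrow> j \<le> L \<Longrightarrow> grid_arrow m n v h f g c r (ord j) (ord (j - l - 1))"
    and col_labels_card_le_2: "\<And>i. card {q \<in> {1..l}. fst (lab q) = i} \<le> 2"
    and row_labels_card_le_2: "\<And>j. card {q \<in> {1..l}. snd (lab q) = j} \<le> 2"

lemma (in coil_frame) transpose: "coil_frame L l n m ord (prod.swap \<circ> lab) h v g f r c"
proof (rule coil_frame.intro)
  show "inj_on (prod.swap \<circ> lab) {1..l}"
    using lab_inj unfolding inj_on_def comp_def by (metis swap_swap)
  show "(prod.swap \<circ> lab) ` {1..l} \<subseteq> {1..n} \<times> {1..m}" using lab_range by auto
  show "in_col h (fst ((prod.swap \<circ> lab) ((j - 1) mod l + 1))) (g (ord j)) \<and>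
      in_col v (snd ((prod.swap \<circ> lab) ((j - 1) mod l + 1))) (f (ord j))" if "j \<in> {1..L}" for j
    using point_in_cell[OF that] by simp
  show "grid_arrow n m h v g f r c (ord (j - 1)) (ord j)" if "1 < j" "j \<le> L" for j
    using arrow_next[OF that] by (rule grid_arrow_transpose)
  show "grid_arrow n m h v g f r c (ord j) (ord (j - l - 1))" if "l + 1 < j" "j \<le> L" for j
    using arrow_back[OF that] by (rule grid_arrow_transpose)
  show "card {q \<in> {1..l}. fst ((prod.swap \<circ> lab) q) = j} \<le> 2" for j
    using row_labels_card_le_2 by simp
  show "card {q \<in> {1..l}. snd ((prod.swap \<circ> lab) q) = i} \<le> 2" for i
    using col_labels_card_le_2 by simp
qed (rule l_ge_3 l_less_L ord_bij h_lines v_lines)+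

context coil_frame
begin

definition residue :: "nat \<Rightarrow> nat" where
  "residue j = (j - 1) mod l + 1"

definition next_label :: "nat \<Rightarrow> nat" where
  "next_label q = q mod l + 1"

definition col_of :: "nat \<Rightarrow> nat" where
  "col_of j = fst (lab (residue j))"

definition row_of :: "nat \<Rightarrow> nat" where
  "row_of j = snd (lab (residue j))"

lemma residue_range: "residue j \<in> {1..l}"
  using l_ge_3 unfolding residue_def by (simp add: Suc_leI)

lemma residue_add_mult: "1 \<le> j \<Longrightarrow> residue (j + d * l) = residue j"
  unfolding residue_def by (metis Nat.add_diff_assoc2 mod_mult_self1)

lemma residue_Suc: "1 \<le> j \<Longrightarrow> residue (Suc j) = next_label (residue j)"
  unfolding residue_def next_label_def by (cases j) (auto simp: mod_Suc_eq)

lemma residue_label: "q \<in> {1..l} \<Longrightarrow> residue q = q"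
  unfolding residue_def by auto

lemma residue_eq_imp_add_mult:
  assumes "residue s = residue t" "1 \<le> s" "s < t"
  obtains d where "t = s + Suc d * l"
proof -
  have "(t - 1) mod l = (s - 1) mod l" using assms(1) unfolding residue_def by simp
  then obtain k where "t - 1 = s - 1 + l * k" using assms(3) by (elim mod_eq_nat1E) simp
  then have k: "t = s + l * k" using assms(2,3) by linarith
  then obtain d where "k = Suc d" using assms(3) by (cases k) simp_all
  then show ?thesis using k that[of d] by (simp add: mult.commute)
qed

lemma next_label_range: "next_label q \<in> {1..l}"
  using l_ge_3 unfolding next_label_def by (simp add: Suc_leI)

lemma next_label_inj: "p \<in> {1..l} \<Longrightarrow> q \<in> {1..l} \<Longrightarrow> next_label p = next_label q \<Longrightarrow> p = q"
  unfolding next_label_def by (cases "p = l"; cases "q = l") auto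

lemma next_label_neq: "q \<in> {1..l} \<Longrightarrow> next_label q \<noteq> q"
  using l_ge_3 unfolding next_label_def by (cases "q = l") auto

lemma point_in_cell_of:
  assumes "j \<in> {1..L}"
  shows "in_col v (col_of j) (f (ord j))" "in_col h (row_of j) (g (ord j))"
    "col_of j \<in> {1..m}" "row_of j \<in> {1..n}"
proof -
  have "lab (residue j) \<in> {1..m} \<times> {1..n}" using lab_range residue_range by blast
  then show "col_of j \<in> {1..m}" "row_of j \<in> {1..n}" unfolding col_of_def row_of_def by auto
  show "in_col v (col_of j) (f (ord j))" "in_col h (row_of j) (g (ord j))"
    using point_in_cell[OF assms] unfolding col_of_def row_of_def residue_def by auto
qed

lemma arrow_along_line:
  assumes "j1 \<in> {1..L}" "j2 \<in> {1..L}" "grid_arrow m n v h f g c r (ord j1) (ord j2)"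
  shows "col_of j1 = col_of j2 \<and> precedes (c (col_of j1)) (f (ord j1)) (f (ord j2)) \<or>
         row_of j1 = row_of j2 \<and> precedes (r (row_of j1)) (g (ord j1)) (g (ord j2))"
  using assms(3) unfolding grid_arrow_def
proof (elim disjE bexE conjE)
  fix i assume i: "i \<in> {1..m}" "in_col v i (f (ord j1))" "in_col v i (f (ord j2))"
    "precedes (c i) (f (ord j1)) (f (ord j2))"
  have "i = col_of j1" "i = col_of j2"
    by (rule in_col_unique[OF v_lines];
        use i point_in_cell_of[OF assms(1)] point_in_cell_of[OF assms(2)] in simp)+
  then show ?thesis using i(4) by simp
next
  fix j assume j: "j \<in> {1..n}" "in_col h j (g (ord j1))" "in_col h j (g (ord j2))"
    "precedes (r j) (g (ord j1)) (g (ord j2))"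
  have "j = row_of j1" "j = row_of j2"
    by (rule in_col_unique[OF h_lines];
        use j point_in_cell_of[OF assms(1)] point_in_cell_of[OF assms(2)] in simp)+
  then show ?thesis using j(4) by simp
qed

lemma arrow_within_column:
  assumes "j1 \<in> {1..L}" "j2 \<in> {1..L}" "grid_arrow m n v h f g c r (ord j1) (ord j2)"
    "row_of j1 \<noteq> row_of j2"
  shows "precedes (c (col_of j1)) (f (ord j1)) (f (ord j2))"
  using arrow_along_line[OF assms(1-3)] assms(4) by auto

lemma next_label_shares_line:
  assumes "q \<in> {1..l}"
  shows "lab (next_label q) \<noteq> lab q"
    "fst (lab (next_label q)) = fst (lab q) \<or> snd (lab (next_label q)) = snd (lab q)"
proof -
  have "grid_arrow m n v h f g c r (ord (Suc q - 1)) (ord (Suc q))"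
    using arrow_next[of "Suc q"] assms l_less_L by simp
  then have "col_of q = col_of (Suc q) \<or> row_of q = row_of (Suc q)"
    using arrow_along_line[of q "Suc q"] assms l_less_L by auto
  moreover have "residue (Suc q) = next_label q"
    using residue_Suc[of q] residue_label[OF assms] assms by simp
  ultimately show "fst (lab (next_label q)) = fst (lab q) \<or> snd (lab (next_label q)) = snd (lab q)"
    using residue_label[OF assms] unfolding col_of_def row_of_def by auto
  show "lab (next_label q) \<noteq> lab q"
    using inj_onD[OF lab_inj] next_label_neq[OF assms] next_label_range assms by blast
qed

text \<open>Both neighbours of q in the cyclic order of labels share a line with q; as no row
  contains three cycle cells, one of them shares the column of q.\<close>
lemma column_partner:
  assumes q: "q \<in> {1..l}"
  obtains p where "p \<in> {1..l}" "p = next_label q \<or> next_label p = q"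
    "fst (lab p) = fst (lab q)" "snd (lab p) \<noteq> snd (lab q)"
proof -
  define p where "p = (if q = 1 then l else q - 1)"
  have p: "p \<in> {1..l}" "next_label p = q" using q l_ge_3 unfolding p_def next_label_def by auto
  note share_next = next_label_shares_line[OF q]
  note share_prev = next_label_shares_line[OF p(1), unfolded p(2)]
  consider "fst (lab (next_label q)) = fst (lab q)" | "fst (lab p) = fst (lab q)"
    | "snd (lab (next_label q)) = snd (lab q)" "snd (lab p) = snd (lab q)"
    using share_next(2) share_prev(2) by metis
  then show ?thesis
  proof cases
    case 1
    then show ?thesis
      using that[of "next_label q"] share_next(1) next_label_range by (simp add: prod_eq_iff)
  next
    case 2
    then show ?thesis using that[of p] share_prev(1) p by (simp add: prod_eq_iff)
  next
    case 3
    have "{q, next_label q, p} \<subseteq> {q' \<in> {1..l}. snd (lab q') = snd (lab q)}"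
      using 3 q p(1) next_label_range by auto
    then have "card {q, next_label q, p} \<le> 2"
      by (intro order_trans[OF card_mono row_labels_card_le_2]) simp_all
    moreover have "next_label q = (if q = l then 1 else Suc q)"
      using q unfolding next_label_def by auto
    then have "q \<noteq> next_label q" "p \<noteq> q" "p \<noteq> next_label q"
      using q l_ge_3 unfolding p_def by auto
    ultimately show ?thesis by (simp add: card_insert_if)
  qed
qed

text \<open>The points ord j and ord (j + l) are consecutive points with the same label.\<close>
definition separates :: "nat \<Rightarrow> nat \<Rightarrow> bool" where
  "separates j k \<longleftrightarrow> k \<in> {1..L} \<and> row_of k \<noteq> row_of j \<and>
     precedes (c (col_of j)) (f (ord (j + l))) (f (ord k)) \<and>
     precedes (c (col_of j)) (f (ord k)) (f (ord j))"

text \<open>Separation can fail only for the one step of the label class q that touches the index e: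
  the last step if the column partner of q follows q in the cyclic order of labels, the first
  step otherwise.\<close>
definition separated_class :: "nat \<Rightarrow> nat \<Rightarrow> (nat \<Rightarrow> nat) \<Rightarrow> bool" where
  "separated_class q e w \<longleftrightarrow> e \<in> {1, L} \<and> inj_on w {1..} \<and>
     (\<forall>j. residue j = q \<longrightarrow> 1 \<le> j \<longrightarrow> j + l \<le> L \<longrightarrow> e \<notin> {j, j + l} \<longrightarrow> separates j (w j))"

lemma separated_class_exists:
  assumes q: "q \<in> {1..l}"
  obtains e w where "separated_class q e w"
proof -
  obtain p where p: "p \<in> {1..l}" "p = next_label q \<or> next_label p = q"
    "fst (lab p) = fst (lab q)" "snd (lab p) \<noteq> snd (lab q)"
    using column_partner[OF q] .
  from p(2) show ?thesis
  proof
    assume p_next: "p = next_label q"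
    show ?thesis
    proof (rule that[of L "\<lambda>j. j + l + 1"], unfold separated_class_def, intro conjI allI impI)
      fix j assume j: "residue j = q" "1 \<le> j" "j + l \<le> L" "L \<notin> {j, j + l}"
      have range: "j \<in> {1..L}" "j + l \<in> {1..L}" "j + l + 1 \<in> {1..L}" using j by auto
      have res: "residue (j + l) = q" "residue (j + l + 1) = p"
        using residue_add_mult[of j 1] residue_Suc[of "j + l"] j(1,2) p_next by simp_all
      have rows: "row_of (j + l) \<noteq> row_of (j + l + 1)" "row_of (j + l + 1) \<noteq> row_of j"
        using res j(1) p(4) unfolding col_of_def row_of_def by auto
      have cols: "col_of (j + l) = col_of j" "col_of (j + l + 1) = col_of j"
        using res j(1) p(3) unfolding col_of_def row_of_def by auto
      have "grid_arrow m n v h f g c r (ord (j + l)) (ord (j + l + 1))"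
        using arrow_next[of "j + l + 1"] j by simp
      moreover have "grid_arrow m n v h f g c r (ord (j + l + 1)) (ord j)"
        using arrow_back[of "j + l + 1"] j by simp
      ultimately show "separates j (j + l + 1)"
        using arrow_within_column[OF range(2,3) _ rows(1)]
          arrow_within_column[OF range(3,1) _ rows(2)] range rows cols
        unfolding separates_def by simp
    qed (auto simp: inj_on_def)
  next
    assume p_prev: "next_label p = q"
    show ?thesis
    proof (rule that[of 1 "\<lambda>j. j - 1"], unfold separated_class_def, intro conjI allI impI)
      fix j assume j: "residue j = q" "1 \<le> j" "j + l \<le> L" "1 \<notin> {j, j + l}"
      have range: "j \<in> {1..L}" "j + l \<in> {1..L}" "j - 1 \<in> {1..L}" using j by auto
      then have "residue (Suc (j - 1)) = next_label (residue (j - 1))"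
        using residue_Suc[of "j - 1"] by simp
      then have res: "residue (j + l) = q" "residue (j - 1) = p"
        using residue_add_mult[of j 1] next_label_inj[OF residue_range p(1)] j p_prev by simp_all
      have rows: "row_of (j + l) \<noteq> row_of (j - 1)" "row_of (j - 1) \<noteq> row_of j"
        using res j(1) p(4) unfolding col_of_def row_of_def by auto
      have cols: "col_of (j + l) = col_of j" "col_of (j - 1) = col_of j"
        using res j(1) p(3) unfolding col_of_def row_of_def by auto
      have "grid_arrow m n v h f g c r (ord (j + l)) (ord (j - 1))"
        using arrow_back[of "j + l"] j by simp
      moreover have "grid_arrow m n v h f g c r (ord (j - 1)) (ord j)"
        using arrow_next[of j] j by simp
      ultimately show "separates j (j - 1)"
        using arrow_within_column[OF range(2,3) _ rows(1)]
          arrow_within_column[OF range(3,1) _ rows(2)] range rows cols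
        unfolding separates_def by simp
    qed (auto simp: inj_on_def)
  qed
qed

lemma separated_class_chain:
  assumes sep: "separated_class q e w" and s: "residue s = q" "1 \<le> s" "s \<noteq> e"
  shows "s + Suc d * l \<le> L \<Longrightarrow> s + Suc d * l \<noteq> e \<Longrightarrow>
    precedes (c (col_of s)) (f (ord (s + Suc d * l))) (f (ord s))"
proof (induction d)
  case 0
  then have "separates s (w s)" using sep s unfolding separated_class_def by simp
  then show ?case unfolding separates_def by (auto intro: precedes_trans)
next
  case (Suc d)
  define j where "j = s + Suc d * l"
  have e: "e \<in> {1, L}" using sep unfolding separated_class_def by simp
  have j: "residue j = q" "col_of j = col_of s" "1 \<le> j" "j + l = s + Suc (Suc d) * l"
    using residue_add_mult[of s "Suc d"] s unfolding j_def col_of_def by simp_all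
  have "j \<noteq> e" using e Suc.prems s(2) unfolding j_def by auto
  then have "precedes (c (col_of s)) (f (ord j)) (f (ord s))"
    using Suc unfolding j_def by simp
  moreover have "separates j (w j)"
    using sep j Suc.prems \<open>j \<noteq> e\<close> unfolding separated_class_def by simp
  ultimately show ?case using j unfolding separates_def by (auto intro: precedes_trans)
qed

context
  fixes C X :: "nat set"
  assumes C_sub_X: "C \<subseteq> X" and X_sub: "X \<subseteq> {1..L}"
    and X_convex: "\<And>x y z. x \<in> X \<Longrightarrow> y \<in> X \<Longrightarrow> z \<in> {1..L} \<Longrightarrow>
      f x < f z \<Longrightarrow> f z < f y \<Longrightarrow> z \<in> X"
    and C_monotone: "monotone_cell f g C"
begin

text \<open>In the coil gridding, ord k lies above or below both ord s and ord t; so, lying between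
  them horizontally, it cannot belong to the monotone set C.\<close>
lemma point_between_in_X_minus_C:
  assumes range: "s \<in> {1..L}" "t \<in> {1..L}" "k \<in> {1..L}" and C: "ord s \<in> C" "ord t \<in> C"
    and rows: "row_of s = row_of t" "row_of k \<noteq> row_of t"
    and between: "precedes \<sigma> (f (ord t)) (f (ord k))" "precedes \<sigma> (f (ord k)) (f (ord s))"
  shows "ord k \<in> X - C"
proof -
  have f_between: "f (ord t) < f (ord k) \<and> f (ord k) < f (ord s) \<or>
      f (ord s) < f (ord k) \<and> f (ord k) < f (ord t)"
    using between unfolding precedes_def by (auto split: if_splits)
  have "ord k \<in> {1..L}" using ord_bij range(3) by (rule bij_betw_apply)
  then have "ord k \<in> X" using X_convex C C_sub_X f_between by blast
  moreover have g_outside: "g (ord k) < g (ord s) \<and> g (ord k) < g (ord t) \<or>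
      g (ord s) < g (ord k) \<and> g (ord t) < g (ord k)"
    using in_col_less[OF h_lines] point_in_cell_of[OF range(1)] point_in_cell_of[OF range(2)]
      point_in_cell_of[OF range(3)] rows
    by (metis atLeastAtMost_iff linorder_neqE_nat)
  moreover have "ord k \<notin> C"
  proof
    assume "ord k \<in> C"
    then show False
      using C_monotone C f_between g_outside unfolding monotone_cell_def
      by (meson order_less_asym)
  qed
  ultimately show ?thesis by simp
qed

lemma separated_class_witness_in_X_minus_C:
  assumes sep: "separated_class q e w"
    and s: "s \<in> {1..L}" "residue s = q" "ord s \<in> C" "s \<noteq> e"
    and t: "t \<in> {1..L}" "residue t = q" "ord t \<in> C" "t \<noteq> e" "s < t"
  shows "l < t" "w (t - l) \<in> {1..L}" "ord (w (t - l)) \<in> X - C"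
proof -
  obtain d where t_eq: "t = s + Suc d * l"
    using residue_eq_imp_add_mult[of s t] s(1,2) t(2,5) by auto
  then show "l < t" using s(1) by simp
  define j where "j = s + d * l"
  have e: "e \<in> {1, L}" using sep unfolding separated_class_def by simp
  have j: "t - l = j" "t = j + l" "residue j = q" "col_of j = col_of s" "row_of j = row_of t"
    "1 \<le> j"
    using residue_add_mult[of s d] s(1,2) t(2) unfolding t_eq j_def col_of_def row_of_def by auto
  have "j \<noteq> e" using e s(1,4) t(1) unfolding t_eq j_def by (cases d) auto
  then have sep_j: "separates j (w j)"
    using sep j t(1,4) unfolding separated_class_def by simp
  have "f (ord j) = f (ord s) \<or> precedes (c (col_of s)) (f (ord j)) (f (ord s))"
  proof (cases d)
    case (Suc d')
    then show ?thesis
      using separated_class_chain[OF sep s(2) _ s(4), of d'] s(1) t(1) \<open>j \<noteq> e\<close> j(2)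
      unfolding j_def by simp
  qed (simp add: j_def)
  then have "precedes (c (col_of s)) (f (ord (w j))) (f (ord s))"
    using sep_j j(4) unfolding separates_def by (auto intro: precedes_trans)
  moreover have "precedes (c (col_of s)) (f (ord t)) (f (ord (w j)))"
    using sep_j j(2,4) unfolding separates_def by simp
  ultimately show "ord (w (t - l)) \<in> X - C" "w (t - l) \<in> {1..L}"
    using point_between_in_X_minus_C[OF s(1) t(1) _ s(3) t(3)] sep_j s(2) t(2) j
    unfolding separates_def row_of_def by auto
qed

lemma class_card_le:
  assumes q: "q \<in> {1..l}"
  shows "card {j \<in> {1..L}. residue j = q \<and> ord j \<in> C} \<le> card (X - C) + 2"
proof -
  obtain e w where sep: "separated_class q e w" using separated_class_exists[OF q] .
  then have w_inj: "inj_on w {1..}" unfolding separated_class_def by simp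
  define I where "I = {j \<in> {1..L}. residue j = q \<and> ord j \<in> C}"
  define E where "E = I - {e}"
  have fin: "finite I" "finite E" unfolding I_def E_def by simp_all
  have "card E \<le> card (X - C) + 1"
  proof (cases "E = {}")
    case False
    define s where "s = Min E"
    have s: "s \<in> E" "\<And>t. t \<in> E \<Longrightarrow> s \<le> t"
      using Min_in[OF fin(2) False] Min_le[OF fin(2)] unfolding s_def by auto
    have wit: "l < t" "w (t - l) \<in> {1..L}" "ord (w (t - l)) \<in> X - C" if "t \<in> E - {s}" for t
      using separated_class_witness_in_X_minus_C[OF sep, of s t] s that
      unfolding E_def I_def by (force simp: le_neq_implies_less)+
    have "card (E - {s}) \<le> card (X - C)"
    proof (rule card_inj_on_le)
      show "inj_on (\<lambda>t. ord (w (t - l))) (E - {s})"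
      proof (rule inj_onI)
        fix t t' assume tt: "t \<in> E - {s}" "t' \<in> E - {s}" "ord (w (t - l)) = ord (w (t' - l))"
        then have "w (t - l) = w (t' - l)"
          using wit inj_onD[OF bij_betw_imp_inj_on[OF ord_bij]] by blast
        then have "t - l = t' - l"
          using wit(1)[OF tt(1)] wit(1)[OF tt(2)] inj_onD[OF w_inj] by simp
        then show "t = t'" using wit(1)[OF tt(1)] wit(1)[OF tt(2)] by simp
      qed
      show "(\<lambda>t. ord (w (t - l))) ` (E - {s}) \<subseteq> X - C" using wit(3) by blast
      show "finite (X - C)" using X_sub finite_subset by blast
    qed
    then show ?thesis using s(1) fin(2) by (simp add: card_Diff_singleton)
  qed simp
  moreover have "card I \<le> card E + 1"
  proof -
    have "card I \<le> card (insert e E)" using fin unfolding E_def by (intro card_mono) auto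
    also have "\<dots> \<le> card E + 1" using fin(2) by (simp add: card_insert_if)
    finally show ?thesis .
  qed
  ultimately show ?thesis unfolding I_def by simp
qed

theorem monotone_subset_card_le: "card C \<le> 2 * l * (card (X - C) + 1)"
proof -
  let ?I = "\<lambda>q. {j \<in> {1..L}. residue j = q \<and> ord j \<in> C}"
  have "C \<subseteq> (\<Union>q\<in>{1..l}. ord ` ?I q)"
  proof
    fix x assume x: "x \<in> C"
    then have "x \<in> ord ` {1..L}" using C_sub_X X_sub bij_betw_imp_surj_on[OF ord_bij] by auto
    then show "x \<in> (\<Union>q\<in>{1..l}. ord ` ?I q)" using x residue_range by blast
  qed
  then have "card C \<le> card (\<Union>q\<in>{1..l}. ord ` ?I q)" by (rule card_mono[rotated]) simp
  also have "\<dots> \<le> (\<Sum>q\<in>{1..l}. card (ord ` ?I q))" by (rule card_UN_le) simp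
  also have "\<dots> \<le> (\<Sum>q\<in>{1..l}. card (?I q))" by (intro sum_mono card_image_le) simp
  also have "\<dots> \<le> (\<Sum>q\<in>{1..l}. card (X - C) + 2)" by (intro sum_mono class_card_le)
  also have "\<dots> \<le> 2 * l * (card (X - C) + 1)" by simp
  finally show ?thesis .
qed

end

lemma grid_cell_card_le:
  assumes "grid_lines k L b" "g ` {1..L} \<subseteq> {1..L}" "j \<in> {1..k}"
    and "monotone_cell f g (grid_cell L f g a b i j)"
  shows "card (grid_cell L f g a b i j)
           \<le> 2 * l * ((\<Sum>j'\<in>{1..k} - {j}. card (grid_cell L f g a b i j')) + 1)"
proof -
  have "card (grid_cell L f g a b i j)
      \<le> 2 * l * (card ({x \<in> {1..L}. in_col a i (f x)} - grid_cell L f g a b i j) + 1)"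
    by (rule monotone_subset_card_le) (use assms(4) in \<open>auto simp: grid_cell_def in_col_def\<close>)
  then show ?thesis using card_line_minus_grid_cell[OF assms(1-3)] by simp
qed

end

lemma coil_frame_if_gridded_coil:
  assumes "gridded_coil m n M c r L \<pi> v h l u ord lab"
  shows "coil_frame L l m n ord lab v h id \<pi> c r"
proof -
  have cyc: "GM_cycle m n M l u" and grid: "M_gridding m n M L \<pi> v h"
    and lab: "bij_betw lab {1..l} (cycle_cells l u)" and l_less_L: "l < L"
    and ord: "bij_betw ord {1..L} {1..L}"
    and cells: "\<forall>i\<in>{1..L}.
      in_cell v h \<pi> (fst (lab ((i - 1) mod l + 1))) (snd (lab ((i - 1) mod l + 1))) (ord i)"
    and C2: "\<forall>i. 1 < i \<and> i \<le> L \<longrightarrow> orient_arrow m n c r L \<pi> v h (ord (i - 1)) (ord i)"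
    and C3: "\<forall>i. l + 1 < i \<and> i \<le> L \<longrightarrow> orient_arrow m n c r L \<pi> v h (ord i) (ord (i - l - 1))"
    using assms unfolding gridded_coil_def by blast+
  show ?thesis
  proof
    show "3 \<le> l" using cyc unfolding GM_cycle_def by simp
    show "l < L" by (fact l_less_L)
    show "bij_betw ord {1..L} {1..L}" by (fact ord)
    show "inj_on lab {1..l}" using lab by (rule bij_betw_imp_inj_on)
    show "lab ` {1..l} \<subseteq> {1..m} \<times> {1..n}"
    proof
      fix x assume "x \<in> lab ` {1..l}"
      then have "x \<in> cycle_cells l u" using bij_betw_imp_surj_on[OF lab] by simp
      then show "x \<in> {1..m} \<times> {1..n}"
        by (rule cycle_cell_endpoints[OF cyc]) (simp add: mem_Times_iff)
    qed
    show "grid_lines m L v" "grid_lines n L h" using grid unfolding M_gridding_def by auto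
    show "card {q \<in> {1..l}. fst (lab q) = i} \<le> 2" "card {q \<in> {1..l}. snd (lab q) = j} \<le> 2"
      for i j by (fact cycle_labels_in_line_card_le_2[OF cyc lab])+
    show "in_col v (fst (lab ((j - 1) mod l + 1))) (id (ord j)) \<and>
        in_col h (snd (lab ((j - 1) mod l + 1))) (\<pi> (ord j))" if "j \<in> {1..L}" for j
      using cells that unfolding in_cell_def in_row_def in_col_def by simp
    show "grid_arrow m n v h id \<pi> c r (ord (j - 1)) (ord j)" if "1 < j" "j \<le> L" for j
      using C2 that by (blast intro: grid_arrow_if_orient_arrow)
    show "grid_arrow m n v h id \<pi> c r (ord j) (ord (j - l - 1))" if "l + 1 < j" "j \<le> L" for j
      using C3 that by (blast intro: grid_arrow_if_orient_arrow)
  qed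
qed

theorem proposition5p5:
  fixes m n L l :: nat and M :: "nat \<Rightarrow> nat \<Rightarrow> int" and c r :: "nat \<Rightarrow> int"
    and \<pi> v h v' h' ord :: "nat \<Rightarrow> nat" and u :: "nat \<Rightarrow> nat + nat" and lab :: "nat \<Rightarrow> nat \<times> nat"
  assumes "gridding_matrix m n M"
    and "partial_mult m n M c r"
    and "\<exists>l0 u0. GM_cycle m n M l0 u0"
    and "gridded_coil m n M c r L \<pi> v h l u ord lab"
    and "M_gridding m n M L \<pi> v' h'"
  shows "(\<forall>i\<in>{1..m}. \<forall>j\<in>{1..n}. card (cell_pts L v' h' \<pi> i j) > 0 \<longrightarrow>
            card (cell_pts L v' h' \<pi> i j)
              \<le> 2 * l * ((\<Sum>j'\<in>{1..n} - {j}. card (cell_pts L v' h' \<pi> i j')) + 1))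
       \<and> (\<forall>j\<in>{1..n}. \<forall>i\<in>{1..m}. card (cell_pts L v' h' \<pi> i j) > 0 \<longrightarrow>
            card (cell_pts L v' h' \<pi> i j)
              \<le> 2 * l * ((\<Sum>i'\<in>{1..m} - {i}. card (cell_pts L v' h' \<pi> i' j)) + 1))"
proof -
  have coil: "coil_frame L l m n ord lab v h id \<pi> c r"
    using assms(4) by (rule coil_frame_if_gridded_coil)
  have lines: "grid_lines m L v'" "grid_lines n L h'" using assms(5) unfolding M_gridding_def by auto
  have \<pi>_range: "\<pi> ` {1..L} \<subseteq> {1..L}"
    using assms(4) unfolding gridded_coil_def is_perm_def bij_betw_def by simp
  have column_bound: "card (cell_pts L v' h' \<pi> i j)
      \<le> 2 * l * ((\<Sum>j'\<in>{1..n} - {j}. card (cell_pts L v' h' \<pi> i j')) + 1)"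
    if "i \<in> {1..m}" "j \<in> {1..n}" for i j
    using coil_frame.grid_cell_card_le[OF coil lines(2) \<pi>_range that(2)]
      M_gridding_cell_monotone[OF assms(1,5) that]
    unfolding cell_pts_eq_grid_cell by simp
  have row_bound: "card (cell_pts L v' h' \<pi> i j)
      \<le> 2 * l * ((\<Sum>i'\<in>{1..m} - {i}. card (cell_pts L v' h' \<pi> i' j)) + 1)"
    if "i \<in> {1..m}" "j \<in> {1..n}" for i j
  proof -
    have "monotone_cell \<pi> id (cell_pts L v' h' \<pi> i j)"
      using M_gridding_cell_monotone[OF assms(1,5) that] by (rule monotone_cell_swap[rotated]) simp
    then show ?thesis
      using coil_frame.grid_cell_card_le[OF coil_frame.transpose[OF coil] lines(1) _ that(1)]
      unfolding cell_pts_eq_grid_cell_transpose by simp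
  qed
  show ?thesis using column_bound row_bound by blast
qed

end
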